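(* Let $d:\mathbb{Z}\to\mathbb{C}$ be bounded and let $J$ be the operator on $\ell^2(\mathbb{Z})$ given by $(Ju)(n)=u(n-1)+d(n)u(n)+u(n+1)$. If $J$ has a boundary eigenvalue with imaginary part $b$, then (i) for every $n\in\mathbb{Z}$, $\Im(d(n))=b$ or $\Im(d(n+1))=b$; (ii) every boundary eigenvalue of $J$ has imaginary part $b$.
   Context: The numerical range is $\operatorname{Num}(J)=\{\langle Ju,u\rangle:\|u\|=1\}$, and a boundary eigenvalue of $J$ is an eigenvalue of $J$ lying in the topological boundary of $\operatorname{Num}(J)$. *)

theory Defs
  imports "HOL-Analysis.Analysis"
begin

definition l2 :: "(int \<Rightarrow> complex) set" where
  "l2 = {u. (\<lambda>n. (cmod (u n))^2) summable_on UNIV}"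

definition jacobi :: "(int \<Rightarrow> complex) \<Rightarrow> (int \<Rightarrow> complex) \<Rightarrow> int \<Rightarrow> complex" where
  "jacobi d u n = u (n - 1) + d n * u n + u (n + 1)"

definition numrange :: "(int \<Rightarrow> complex) \<Rightarrow> complex set" where
  "numrange d = {infsum (\<lambda>n. jacobi d u n * cnj (u n)) UNIV | u.
      u \<in> l2 \<and> infsum (\<lambda>n. (cmod (u n))^2) UNIV = 1}"

definition is_eigenvalue :: "(int \<Rightarrow> complex) \<Rightarrow> complex \<Rightarrow> bool" where
  "is_eigenvalue d z \<longleftrightarrow> (\<exists>u \<in> l2. u \<noteq> (\<lambda>_. 0) \<and> jacobi d u = (\<lambda>n. z * u n))"

definition boundary_eigenvalue :: "(int \<Rightarrow> complex) \<Rightarrow> complex \<Rightarrow> bool" where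
  "boundary_eigenvalue d z \<longleftrightarrow> is_eigenvalue d z \<and> z \<in> frontier (numrange d)"

end

theory Submission
  imports Defs
begin

(* Let u be an l2 eigenvector of J for a boundary eigenvalue z and let m be a site
   with u(m) \<noteq> 0.  Put w = e_m - c u with c chosen so that w is orthogonal to u.  For v = u + s w
   the Rayleigh quotient <Jv,v>/|v|^2 equals (z N + s a + |s|^2 C)/(N + |s|^2 P), where
   a = <Jw,u>.  If a \<noteq> 0, these quotients cover a whole disc around z (a fixed point argument in
   the variable |s|^2), so z would be interior to Num(J).  Hence a = 0, which unfolds to
   d(m) - conj(d(m)) = z - conj(z), i.e. Im d(m) = Im z wherever u(m) \<noteq> 0.
   (i) then follows because an eigenvector cannot vanish at two consecutive sites.
   (ii): if another boundary eigenvalue \<mu> had Im \<mu> \<noteq> Im z, its eigenvector and u would have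
   disjoint supports; this forces |u| to be 2-periodic, contradicting u \<in> l2. *)

section \<open>The inner product on l2\<close>

definition l2_inner :: "(int \<Rightarrow> complex) \<Rightarrow> (int \<Rightarrow> complex) \<Rightarrow> complex" where
  "l2_inner f g = infsum (\<lambda>n. f n * cnj (g n)) UNIV"

definition l2_sqnorm :: "(int \<Rightarrow> complex) \<Rightarrow> real" where
  "l2_sqnorm f = infsum (\<lambda>n. (cmod (f n))^2) UNIV"

definition unit_vec :: "int \<Rightarrow> int \<Rightarrow> complex" where
  "unit_vec m = (\<lambda>n. if n = m then 1 else 0)"

lemma l2_add: assumes "f \<in> l2" "g \<in> l2" shows "(\<lambda>n. f n + g n) \<in> l2"
proof -
  have sum2: "(\<lambda>n. 2 * (cmod (f n))^2 + 2 * (cmod (g n))^2) summable_on UNIV"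
    using assms unfolding l2_def by (intro summable_on_add summable_on_cmult_right) auto
  have "(cmod (f n + g n))^2 \<le> 2 * (cmod (f n))^2 + 2 * (cmod (g n))^2" for n
  proof -
    have "(cmod (f n + g n))^2 \<le> (cmod (f n) + cmod (g n))^2"
      by (simp add: power_mono norm_triangle_ineq)
    also have "\<dots> \<le> 2 * (cmod (f n))^2 + 2 * (cmod (g n))^2"
      using zero_le_power2[of "cmod (f n) - cmod (g n)"] by (simp add: power2_eq_square algebra_simps)
    finally show ?thesis .
  qed
  thus ?thesis unfolding l2_def using summable_on_comparison_test[OF sum2] by auto
qed

lemma l2_scale: assumes "f \<in> l2" shows "(\<lambda>n. c * f n) \<in> l2"
  using assms unfolding l2_def by (simp add: norm_mult power_mult_distrib summable_on_cmult_right)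

lemma l2_bounded_mult: assumes "f \<in> l2" "\<And>n. cmod (d n) \<le> B" shows "(\<lambda>n. d n * f n) \<in> l2"
proof -
  have sumB: "(\<lambda>n. B^2 * (cmod (f n))^2) summable_on UNIV"
    using assms unfolding l2_def by (intro summable_on_cmult_right) auto
  have "(cmod (d n * f n))^2 \<le> B^2 * (cmod (f n))^2" for n
    by (simp add: norm_mult power_mult_distrib mult_right_mono power_mono assms(2))
  thus ?thesis unfolding l2_def using summable_on_comparison_test[OF sumB] by auto
qed

lemma l2_shift: assumes "f \<in> l2" shows "(\<lambda>n. f (n + k)) \<in> l2"
proof -
  have "range (\<lambda>n. n + k) = UNIV"
    by (rule surjI[where f="\<lambda>n. n - k"]) simp
  hence "(\<lambda>n. (cmod (f n))^2) summable_on ((\<lambda>n. n + k) ` UNIV)"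
    using assms unfolding l2_def by simp
  hence "((\<lambda>n. (cmod (f n))^2) \<circ> (\<lambda>n. n + k)) summable_on UNIV"
    by (subst (asm) summable_on_reindex) (auto simp: inj_on_def)
  thus ?thesis unfolding l2_def by (simp add: o_def)
qed

lemma l2_unit_vec: "unit_vec m \<in> l2"
proof -
  have "(\<lambda>n. (cmod (unit_vec m n))^2) summable_on {m}" by simp
  thus ?thesis unfolding l2_def mem_Collect_eq
    by (subst (asm) summable_on_cong_neutral[where T=UNIV]) (auto simp: unit_vec_def)
qed

lemma l2_inner_summable: assumes "f \<in> l2" "g \<in> l2" shows "(\<lambda>n. f n * cnj (g n)) summable_on UNIV"
proof -
  have sum2: "(\<lambda>n. (cmod (f n))^2 + (cmod (g n))^2) summable_on UNIV"
    using assms unfolding l2_def by (intro summable_on_add) auto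
  have "norm (f n * cnj (g n)) \<le> (cmod (f n))^2 + (cmod (g n))^2" for n
  proof -
    have "norm (f n * cnj (g n)) = cmod (f n) * cmod (g n)" by (simp add: norm_mult)
    thus ?thesis
      using power2_diff[of "cmod (f n)" "cmod (g n)"] zero_le_power2[of "cmod (f n) - cmod (g n)"]
        mult_nonneg_nonneg[OF norm_ge_zero[of "f n"] norm_ge_zero[of "g n"]] by linarith
  qed
  hence "(\<lambda>n. norm (f n * cnj (g n))) summable_on UNIV"
    using summable_on_comparison_test[OF sum2] by auto
  thus ?thesis using summable_on_iff_abs_summable_on_complex by blast
qed

lemma l2_inner_add_left: assumes "f \<in> l2" "g \<in> l2" "h \<in> l2"
  shows "l2_inner (\<lambda>n. f n + g n) h = l2_inner f h + l2_inner g h"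
  unfolding l2_inner_def using l2_inner_summable[OF assms(1,3)] l2_inner_summable[OF assms(2,3)]
  by (simp add: distrib_right infsum_add)

lemma l2_inner_scale_left: "l2_inner (\<lambda>n. c * f n) h = c * l2_inner f h"
  unfolding l2_inner_def by (simp add: mult.assoc infsum_cmult_right')

lemma l2_inner_cnj: "l2_inner g f = cnj (l2_inner f g)"
  unfolding l2_inner_def infsum_cnj[symmetric] by (simp add: mult.commute)

lemma l2_inner_add_right: assumes "f \<in> l2" "g \<in> l2" "h \<in> l2"
  shows "l2_inner h (\<lambda>n. f n + g n) = l2_inner h f + l2_inner h g"
  using l2_inner_add_left[OF assms] by (metis l2_inner_cnj complex_cnj_add)

lemma l2_inner_scale_right: "l2_inner h (\<lambda>n. c * f n) = cnj c * l2_inner h f"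
  by (metis l2_inner_cnj l2_inner_scale_left complex_cnj_mult complex_cnj_cnj)

lemma l2_inner_self: assumes "f \<in> l2" shows "l2_inner f f = of_real (l2_sqnorm f)"
proof -
  have "((\<lambda>n. (cmod (f n))^2) has_sum l2_sqnorm f) UNIV"
    using assms unfolding l2_def l2_sqnorm_def by auto
  from has_sum_of_real[OF this, where 'a=complex]
  have "((\<lambda>n. f n * cnj (f n)) has_sum (of_real (l2_sqnorm f))) UNIV"
    unfolding complex_norm_square .
  thus ?thesis unfolding l2_inner_def by (rule infsumI)
qed

lemma l2_inner_unit_vec: "l2_inner (unit_vec k) u = cnj (u k)"
proof -
  have "l2_inner (unit_vec k) u = infsum (\<lambda>n. unit_vec k n * cnj (u n)) {k}"
    unfolding l2_inner_def by (rule infsum_cong_neutral) (auto simp: unit_vec_def)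
  thus ?thesis by (simp add: unit_vec_def)
qed

text \<open>Expansion of the inner product of two vectors of the form f + s g; it describes
  the Rayleigh quotient along a complex line.\<close>
lemma l2_inner_expand:
  assumes "f \<in> l2" "g \<in> l2" "h \<in> l2" "k \<in> l2"
  shows "l2_inner (\<lambda>n. f n + s * g n) (\<lambda>n. h n + s * k n)
       = l2_inner f h + cnj s * l2_inner f k + s * l2_inner g h + s * cnj s * l2_inner g k"
proof -
  have sg: "(\<lambda>n. s * g n) \<in> l2" "(\<lambda>n. s * k n) \<in> l2" using assms by (auto intro: l2_scale)
  have "l2_inner (\<lambda>n. f n + s * g n) (\<lambda>n. h n + s * k n)
      = l2_inner f (\<lambda>n. h n + s * k n) + s * l2_inner g (\<lambda>n. h n + s * k n)"
    using l2_inner_add_left[OF assms(1) sg(1) l2_add[OF assms(3) sg(2)]]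
    by (simp add: l2_inner_scale_left)
  also have "\<dots> = l2_inner f h + cnj s * l2_inner f k + s * (l2_inner g h + cnj s * l2_inner g k)"
    using l2_inner_add_right[OF assms(3) sg(2) assms(1)] l2_inner_add_right[OF assms(3) sg(2) assms(2)]
    by (simp add: l2_inner_scale_right)
  finally show ?thesis by (simp add: algebra_simps)
qed

lemma l2_sqnorm_nonneg: "l2_sqnorm f \<ge> 0"
  unfolding l2_sqnorm_def by (rule infsum_nonneg) simp

lemma l2_sqnorm_pos: assumes "u \<in> l2" "u m \<noteq> 0" shows "l2_sqnorm u > 0"
proof -
  have "sum (\<lambda>n. (cmod (u n))^2) {m} \<le> l2_sqnorm u"
    unfolding l2_sqnorm_def using assms(1) unfolding l2_def
    by (intro finite_sum_le_infsum) auto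
  hence "(cmod (u m))^2 \<le> l2_sqnorm u" by simp
  moreover have "(cmod (u m))^2 > 0" using assms(2) by simp
  ultimately show ?thesis by linarith
qed

lemma jacobi_l2: assumes "bounded (range d)" "u \<in> l2" shows "jacobi d u \<in> l2"
proof -
  obtain B where B: "\<And>n. cmod (d n) \<le> B" using assms(1) by (meson bounded_iff rangeI)
  have "(\<lambda>n. u (n + -1) + d n * u n) \<in> l2"
    using l2_add[OF l2_shift[OF assms(2)] l2_bounded_mult[OF assms(2) B]] .
  hence "(\<lambda>n. (u (n + -1) + d n * u n) + u (n + 1)) \<in> l2"
    using l2_add l2_shift[OF assms(2)] by blast
  thus ?thesis unfolding jacobi_def by (simp add: fun_eq_iff)
qed

lemma jacobi_linear: "jacobi d (\<lambda>n. f n + c * g n) = (\<lambda>n. jacobi d f n + c * jacobi d g n)"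
  unfolding jacobi_def by (simp add: fun_eq_iff algebra_simps)

lemma jacobi_scale: "jacobi d (\<lambda>n. c * g n) = (\<lambda>n. c * jacobi d g n)"
  unfolding jacobi_def by (simp add: fun_eq_iff algebra_simps)

lemma l2_inner_jacobi_unit_vec:
  assumes "u \<in> l2"
  shows "l2_inner (jacobi d (unit_vec m)) u = cnj (u (m+1)) + d m * cnj (u m) + cnj (u (m-1))"
proof -
  have col: "jacobi d (unit_vec m)
      = (\<lambda>n. (unit_vec (m+1) n + d m * unit_vec m n) + unit_vec (m - 1) n)"
    unfolding jacobi_def unit_vec_def by (auto simp: fun_eq_iff)
  have l1: "(\<lambda>n. unit_vec (m+1) n + d m * unit_vec m n) \<in> l2"
    by (intro l2_add l2_unit_vec l2_scale)
  have "l2_inner (jacobi d (unit_vec m)) u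
      = l2_inner (\<lambda>n. unit_vec (m+1) n + d m * unit_vec m n) u + l2_inner (unit_vec (m-1)) u"
    unfolding col by (rule l2_inner_add_left[OF l1 l2_unit_vec assms])
  also have "l2_inner (\<lambda>n. unit_vec (m+1) n + d m * unit_vec m n) u
      = l2_inner (unit_vec (m+1)) u + d m * l2_inner (unit_vec m) u"
    using l2_inner_add_left[OF l2_unit_vec l2_scale[OF l2_unit_vec] assms]
    by (simp add: l2_inner_scale_left)
  finally show ?thesis by (simp add: l2_inner_unit_vec)
qed

lemma rayleigh_quotient_in_numrange:
  assumes "v \<in> l2" "l2_sqnorm v > 0"
  shows "l2_inner (jacobi d v) v / of_real (l2_sqnorm v) \<in> numrange d"
proof -
  define c where "c = 1 / sqrt (l2_sqnorm v)"
  define u where "u = (\<lambda>n. of_real c * v n)"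
  have u: "u \<in> l2" unfolding u_def by (rule l2_scale[OF assms(1)])
  have cc: "c * c = 1 / l2_sqnorm v" unfolding c_def using assms(2)
    by (simp add: real_sqrt_mult[symmetric])
  have "of_real (l2_sqnorm u) = l2_inner u u" using l2_inner_self[OF u] by simp
  also have "\<dots> = of_real (c * c * l2_sqnorm v)"
    unfolding u_def l2_inner_scale_left l2_inner_scale_right using l2_inner_self[OF assms(1)] by simp
  also have "\<dots> = 1" using cc assms(2) by simp
  finally have unit: "l2_sqnorm u = 1" by (metis of_real_eq_1_iff)
  have "l2_inner (jacobi d u) u = of_real (c * c) * l2_inner (jacobi d v) v"
    unfolding u_def jacobi_scale l2_inner_scale_left l2_inner_scale_right by simp
  also have "\<dots> = l2_inner (jacobi d v) v / of_real (l2_sqnorm v)"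
    using cc by simp
  finally show ?thesis
    unfolding numrange_def using u unit unfolding l2_sqnorm_def l2_inner_def by force
qed

section \<open>A disc-covering lemma for quadratic quotients\<close>

text \<open>For a small perturbation D, the map \<rho> \<mapsto> |D + \<rho> E|^2 has a nonnegative fixed point
  (intermediate value theorem on [0, 2|D|]).\<close>
lemma sq_norm_affine_fixed_point:
  fixes D E :: complex and K :: real
  assumes "cmod E \<le> K" "cmod D * (1 + 2*K)^2 < 1"
  shows "\<exists>\<rho>\<ge>0. \<rho> = (cmod (D + of_real \<rho> * E))^2"
proof (cases "D = 0")
  case True thus ?thesis by (intro exI[of _ 0]) simp
next
  case False
  define h where "h \<rho> = (cmod (D + of_real \<rho> * E))^2 - \<rho>" for \<rho>
  have Dpos: "cmod D > 0" using False by simp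
  have "h (2 * cmod D) \<le> 0"
  proof -
    have "cmod (D + of_real (2 * cmod D) * E) \<le> cmod D + 2 * cmod D * cmod E"
      using norm_triangle_ineq[of D "of_real (2 * cmod D) * E"] by (simp add: norm_mult)
    also have "\<dots> \<le> cmod D * (1 + 2 * K)"
      using assms(1) Dpos by (simp add: algebra_simps)
    finally have "(cmod (D + of_real (2 * cmod D) * E))^2 \<le> (cmod D * (1 + 2 * K))^2"
      by (intro power_mono) auto
    also have "\<dots> = cmod D * (cmod D * (1 + 2*K)^2)" by (simp add: power2_eq_square)
    also have "\<dots> \<le> cmod D" using assms(2) Dpos by (simp add: mult_left_le)
    finally show ?thesis unfolding h_def using Dpos by linarith
  qed
  moreover have "0 \<le> h 0" unfolding h_def by simp
  moreover have "continuous_on {0 .. 2 * cmod D} h" unfolding h_def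
    by (intro continuous_intros)
  ultimately obtain x where "0 \<le> x" "h x = 0"
    using IVT2'[of h "2 * cmod D" 0 0] Dpos by auto
  thus ?thesis unfolding h_def by auto
qed

text \<open>Solving \<zeta> = (z N + s a + |s|^2 C)/(N + |s|^2 P) for s: writing D = (\<zeta> - z) N and
  E = (\<zeta> P - C)/|a|^2, the equation becomes s a = D + |s a|^2 E, which the fixed point lemma
  solves for \<rho> = |s a|^2 as soon as D is small compared with E.\<close>
lemma quadratic_quotient_solvable:
  fixes \<zeta> z a C :: complex and N P K :: real
  assumes "N > 0" "P \<ge> 0" "a \<noteq> 0"
    and E: "cmod ((\<zeta> * of_real P - C) / of_real ((cmod a)^2)) \<le> K"
    and D: "cmod ((\<zeta> - z) * of_real N) * (1 + 2*K)^2 < 1"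
  shows "\<exists>s. \<zeta> = (z * of_real N + s * a + of_real ((cmod s)^2) * C) / of_real (N + (cmod s)^2 * P)"
proof -
  define D where "D = (\<zeta> - z) * of_real N"
  define E where "E = (\<zeta> * of_real P - C) / of_real ((cmod a)^2)"
  obtain \<rho> where \<rho>: "\<rho> \<ge> 0" "\<rho> = (cmod (D + of_real \<rho> * E))^2"
    using sq_norm_affine_fixed_point[OF E D] unfolding D_def E_def by blast
  define s where "s = (D + of_real \<rho> * E) / a"
  have sa: "s * a = D + of_real \<rho> * E" unfolding s_def using assms(3) by simp
  have ns: "(of_real ((cmod s)^2) :: complex) = of_real \<rho> / of_real ((cmod a)^2)"
    unfolding s_def using \<rho>(2) by (simp add: norm_divide power_divide)
  have a2: "(of_real ((cmod a)^2) :: complex) \<noteq> 0" using assms(3) by simp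
  have "\<zeta> * of_real (N + (cmod s)^2 * P) = \<zeta> * of_real N + \<zeta> * of_real P * of_real ((cmod s)^2)"
    by (simp add: algebra_simps)
  also have "\<dots> = z * of_real N + s * a + of_real ((cmod s)^2) * C"
    unfolding sa ns D_def E_def using a2 by (simp add: field_simps)
  finally have eq: "\<zeta> * of_real (N + (cmod s)^2 * P) = z * of_real N + s * a + of_real ((cmod s)^2) * C" .
  have "(of_real (N + (cmod s)^2 * P) :: complex) \<noteq> 0"
    using assms(1,2) by (metis add_pos_nonneg mult_nonneg_nonneg zero_le_power2 of_real_eq_0_iff less_irrefl)
  with eq show ?thesis by (metis nonzero_mult_div_cancel_right)
qed

text \<open>If a \<noteq> 0, the quotients (z N + s a + |s|^2 C)/(N + |s|^2 P), s \<in> \<complex>, cover a disc around z: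
  for \<zeta> close to z, the quantity E stays bounded while D tends to 0.\<close>
lemma quadratic_quotients_cover_disc:
  fixes z a C :: complex and N P :: real
  assumes "N > 0" "P \<ge> 0" "a \<noteq> 0"
  shows "\<exists>r>0. \<forall>\<zeta>. cmod (\<zeta> - z) < r \<longrightarrow>
           (\<exists>s. \<zeta> = (z * of_real N + s * a + of_real ((cmod s)^2) * C) / of_real (N + (cmod s)^2 * P))"
proof -
  define K where "K = ((cmod z + 1) * P + cmod C) / (cmod a)^2"
  have K0: "K \<ge> 0" unfolding K_def using assms by simp
  define r where "r = min 1 (1 / (N * (1 + 2*K)^2))"
  have pos: "N * (1 + 2*K)^2 > 0" using assms K0 by simp
  have "\<exists>s. \<zeta> = (z * of_real N + s * a + of_real ((cmod s)^2) * C) / of_real (N + (cmod s)^2 * P)"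
    if \<zeta>: "cmod (\<zeta> - z) < r" for \<zeta>
  proof (rule quadratic_quotient_solvable[OF assms])
    have "cmod \<zeta> \<le> cmod z + 1"
      using \<zeta> norm_triangle_ineq2[of \<zeta> z] unfolding r_def by linarith
    hence "cmod \<zeta> * P \<le> (cmod z + 1) * P" using assms(2) by (rule mult_right_mono)
    hence "cmod (\<zeta> * of_real P - C) \<le> (cmod z + 1) * P + cmod C"
      using norm_triangle_ineq4[of "\<zeta> * of_real P" C] assms(2) by (simp add: norm_mult)
    thus "cmod ((\<zeta> * of_real P - C) / of_real ((cmod a)^2)) \<le> K" unfolding K_def using assms(3)
      by (simp add: norm_divide norm_power divide_right_mono)
    have "cmod ((\<zeta> - z) * of_real N) = cmod (\<zeta> - z) * N" using assms(1) by (simp add: norm_mult)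
    also have "\<dots> < (1 / (N * (1 + 2*K)^2)) * N"
      using \<zeta> assms(1) unfolding r_def by (intro mult_strict_right_mono) auto
    finally have "cmod ((\<zeta> - z) * of_real N) * (1 + 2*K)^2 < (1 / (N * (1 + 2*K)^2)) * N * (1 + 2*K)^2"
      using pos by (intro mult_strict_right_mono) auto
    also have "\<dots> = 1" using pos assms(1) K0 by (simp add: field_simps)
    finally show "cmod ((\<zeta> - z) * of_real N) * (1 + 2*K)^2 < 1" .
  qed
  moreover have "r > 0" unfolding r_def using pos by simp
  ultimately show ?thesis by blast
qed

section \<open>Boundary eigenvalues force Im d = Im z on the support of the eigenvector\<close>

lemma rayleigh_quotient_along_line:
  assumes bd: "bounded (range d)" and u: "u \<in> l2" "u m0 \<noteq> 0"
    and ev: "jacobi d u = (\<lambda>n. z * u n)" and w: "w \<in> l2" and orth: "l2_inner w u = 0"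
  shows "(z * of_real (l2_sqnorm u) + s * l2_inner (jacobi d w) u
          + of_real ((cmod s)^2) * l2_inner (jacobi d w) w)
         / of_real (l2_sqnorm u + (cmod s)^2 * l2_sqnorm w) \<in> numrange d"
proof -
  define v where "v = (\<lambda>n. u n + s * w n)"
  have v: "v \<in> l2" unfolding v_def by (intro l2_add l2_scale u(1) w)
  have Ju: "jacobi d u \<in> l2" and Jw: "jacobi d w \<in> l2" using jacobi_l2[OF bd] u w by auto
  have uw: "l2_inner u w = 0" using orth l2_inner_cnj[of u w] by simp
  have Juu: "l2_inner (jacobi d u) u = z * of_real (l2_sqnorm u)"
    unfolding ev l2_inner_scale_left l2_inner_self[OF u(1)] ..
  have Juw: "l2_inner (jacobi d u) w = 0" unfolding ev l2_inner_scale_left uw by simp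
  have sc: "s * cnj s = of_real ((cmod s)^2)" by (rule complex_norm_square[symmetric])
  have "l2_inner v v = of_real (l2_sqnorm u) + of_real ((cmod s)^2) * of_real (l2_sqnorm w)"
    unfolding v_def l2_inner_expand[OF u(1) w u(1) w] l2_inner_self[OF u(1)] l2_inner_self[OF w]
      uw orth sc by simp
  hence nv: "l2_sqnorm v = l2_sqnorm u + (cmod s)^2 * l2_sqnorm w" using l2_inner_self[OF v]
    by (metis of_real_add of_real_mult of_real_eq_iff)
  have "l2_inner (jacobi d v) v = z * of_real (l2_sqnorm u) + s * l2_inner (jacobi d w) u
          + of_real ((cmod s)^2) * l2_inner (jacobi d w) w"
    unfolding v_def jacobi_linear l2_inner_expand[OF Ju Jw u(1) w] Juu Juw sc by simp
  moreover have "l2_sqnorm v > 0"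
    unfolding nv using l2_sqnorm_pos[OF u] l2_sqnorm_nonneg[of w] by (simp add: add_pos_nonneg)
  ultimately show ?thesis using rayleigh_quotient_in_numrange[OF v, where d=d] unfolding nv by simp
qed

text \<open>Interior criterion: if u is an eigenvector for z and some w \<perp> u has <Jw,u> \<noteq> 0, then z is
  an interior point of the numerical range, since the quotients along u + s w cover a disc
  around z.\<close>
lemma eigenvalue_interior_numrange:
  assumes bd: "bounded (range d)" and u: "u \<in> l2" "u m0 \<noteq> 0"
    and ev: "jacobi d u = (\<lambda>n. z * u n)"
    and w: "w \<in> l2" and orth: "l2_inner w u = 0" and a: "l2_inner (jacobi d w) u \<noteq> 0"
  shows "z \<in> interior (numrange d)"
proof -
  have N0: "l2_sqnorm u > 0" by (rule l2_sqnorm_pos[OF u])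
  obtain r where "r > 0" and r: "\<And>\<zeta>. cmod (\<zeta> - z) < r \<Longrightarrow> \<exists>s.
      \<zeta> = (z * of_real (l2_sqnorm u) + s * l2_inner (jacobi d w) u
             + of_real ((cmod s)^2) * l2_inner (jacobi d w) w)
           / of_real (l2_sqnorm u + (cmod s)^2 * l2_sqnorm w)"
    using quadratic_quotients_cover_disc[OF N0 l2_sqnorm_nonneg a] by blast
  have "ball z r \<subseteq> numrange d"
  proof
    fix \<zeta> assume "\<zeta> \<in> ball z r"
    hence "cmod (\<zeta> - z) < r" by (simp add: dist_norm norm_minus_commute)
    with r rayleigh_quotient_along_line[OF bd u ev w orth] show "\<zeta> \<in> numrange d" by metis
  qed
  with \<open>r > 0\<close> show ?thesis using mem_interior by blast
qed

text \<open>Local consequence at a site m with u(m) \<noteq> 0: testing with w = e_m - c u (orthogonal to u),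
  the interior criterion forces <J e_m, u> = z conj(u m); compared with the eigenvalue equation
  at m this says d m - conj (d m) = z - conj z.\<close>
lemma boundary_eigenvector_site:
  assumes bd: "bounded (range d)" and u: "u \<in> l2" "u m0 \<noteq> 0"
    and ev: "jacobi d u = (\<lambda>n. z * u n)" and notint: "z \<notin> interior (numrange d)"
    and um: "u m \<noteq> 0"
  shows "Im (d m) = Im z"
proof -
  define N where "N = l2_sqnorm u"
  have N0: "N > 0" unfolding N_def by (rule l2_sqnorm_pos[OF u])
  have uu: "l2_inner u u = of_real N" unfolding N_def by (rule l2_inner_self[OF u(1)])
  define c where "c = - (cnj (u m) / of_real N)"
  define w where "w = (\<lambda>n. unit_vec m n + c * u n)"
  have w: "w \<in> l2" unfolding w_def by (intro l2_add l2_unit_vec l2_scale u(1))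
  have "l2_inner w u = cnj (u m) + c * of_real N"
    unfolding w_def using l2_inner_add_left[OF l2_unit_vec l2_scale[OF u(1)] u(1)]
    by (simp add: l2_inner_scale_left l2_inner_unit_vec uu)
  hence orth: "l2_inner w u = 0" using N0 by (simp add: c_def)
  have "l2_inner (jacobi d w) u
      = l2_inner (jacobi d (unit_vec m)) u + c * (z * of_real N)"
    unfolding w_def jacobi_linear ev
    using l2_inner_add_left[OF jacobi_l2[OF bd l2_unit_vec] l2_scale[OF l2_scale[OF u(1)]] u(1)]
    by (simp add: l2_inner_scale_left uu)
  also have "\<dots> = cnj (u (m+1)) + d m * cnj (u m) + cnj (u (m-1)) - cnj (u m) * z"
    unfolding l2_inner_jacobi_unit_vec[OF u(1)] using N0 by (simp add: c_def)
  finally have "l2_inner (jacobi d w) u = \<dots>" .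
  moreover have "l2_inner (jacobi d w) u = 0"
    using eigenvalue_interior_numrange[OF bd u ev w orth] notint by blast
  ultimately have "cnj (u (m+1)) + d m * cnj (u m) + cnj (u (m-1)) = cnj (u m) * z" by simp
  from arg_cong[OF this, of cnj]
  have adj: "u (m-1) + cnj (d m) * u m + u (m+1) = cnj z * u m" by (simp add: algebra_simps)
  have eig: "u (m-1) + d m * u m + u (m+1) = z * u m"
    using fun_cong[OF ev, of m] unfolding jacobi_def .
  have "(d m - cnj (d m)) * u m
      = (u (m-1) + d m * u m + u (m+1)) - (u (m-1) + cnj (d m) * u m + u (m+1))"
    by (simp add: algebra_simps)
  also have "\<dots> = (z - cnj z) * u m" unfolding eig adj by (simp add: algebra_simps)
  finally have "(d m - cnj (d m)) * u m = (z - cnj z) * u m" .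
  hence "d m - cnj (d m) = z - cnj z" using um by simp
  hence "Im (d m - cnj (d m)) = Im (z - cnj z)" by simp
  thus ?thesis by simp
qed

section \<open>Unique continuation and disjoint supports\<close>

lemma eigen_equation:
  assumes "jacobi d u = (\<lambda>n. z * u n)"
  shows "u (n - 1) + d n * u n + u (n + 1) = z * u n"
  using fun_cong[OF assms, of n] unfolding jacobi_def .

lemma eigen_two_consecutive_zeros:
  assumes ev: "jacobi d u = (\<lambda>n. z * u n)" and "u m = 0" and "u (m+1) = 0"
  shows "u n = 0"
proof -
  have up: "u (m + int k) = 0 \<and> u (m + int k + 1) = 0" for k
  proof (induction k)
    case 0 thus ?case using assms by simp
  next
    case (Suc k)
    have "u (m + int k + 1 - 1) + d (m + int k + 1) * u (m + int k + 1) + u (m + int k + 1 + 1)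
          = z * u (m + int k + 1)" by (rule eigen_equation[OF ev])
    hence "u (m + int k + 1 + 1) = 0" using Suc by simp
    thus ?case using Suc by (simp add: algebra_simps)
  qed
  have down: "u (m - int k) = 0 \<and> u (m - int k + 1) = 0" for k
  proof (induction k)
    case 0 thus ?case using assms by simp
  next
    case (Suc k)
    have "u (m - int k - 1) + d (m - int k) * u (m - int k) + u (m - int k + 1)
          = z * u (m - int k)" by (rule eigen_equation[OF ev])
    hence "u (m - int k - 1) = 0" using Suc by simp
    thus ?case using Suc by (simp add: algebra_simps)
  qed
  show ?thesis
  proof (cases "n \<ge> m")
    case True
    hence "n = m + int (nat (n - m))" by simp
    thus ?thesis using up by metis
  next
    case False
    hence "n = m - int (nat (m - n))" by simp
    thus ?thesis using down by metis
  qed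
qed

text \<open>Two nonzero eigenvectors (one in l2) cannot have disjoint supports: each would then
  vanish at every other site, so the recurrence gives u(n+2) = -u(n) on the support and |u| is
  2-periodic, contradicting square summability.\<close>
lemma eigenvectors_not_disjoint:
  assumes u: "u \<in> l2" "u n0 \<noteq> 0" and evu: "jacobi d u = (\<lambda>n. z * u n)"
    and v: "v n1 \<noteq> 0" and evv: "jacobi d v = (\<lambda>n. \<mu> * v n)"
    and disjoint: "\<And>n. u n = 0 \<or> v n = 0"
  shows False
proof -
  have alternating: "u n = 0 \<longleftrightarrow> u (n+1) \<noteq> 0" for n
  proof
    assume "u n = 0" thus "u (n+1) \<noteq> 0" using eigen_two_consecutive_zeros[OF evu, of n n0] u(2) by blast
  next
    assume "u (n+1) \<noteq> 0"
    show "u n = 0"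
    proof (rule ccontr)
      assume "u n \<noteq> 0"
      hence "v n = 0" "v (n+1) = 0" using disjoint \<open>u (n+1) \<noteq> 0\<close> by blast+
      thus False using eigen_two_consecutive_zeros[OF evv, of n n1] v by blast
    qed
  qed
  have period2: "cmod (u (n + 2)) = cmod (u n)" for n
  proof (cases "u (n+1) = 0")
    case True
    have "u (n + 1 - 1) + d (n+1) * u (n+1) + u (n + 1 + 1) = z * u (n+1)"
      by (rule eigen_equation[OF evu])
    hence "u (n+2) = - u n" using True by (simp add: add.assoc eq_neg_iff_add_eq_0 add.commute)
    thus ?thesis by simp
  next
    case False
    hence "u n = 0" using alternating[of n] by simp
    moreover have "u (n+2) = 0" using alternating[of "n+1"] False by (simp add: add.assoc)
    ultimately show ?thesis by simp
  qed
  have const: "cmod (u (n0 + 2 * int k)) = cmod (u n0)" for k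
  proof (induction k)
    case 0 thus ?case by simp
  next
    case (Suc k)
    have "cmod (u (n0 + 2 * int k + 2)) = cmod (u (n0 + 2 * int k))" by (rule period2)
    thus ?case using Suc by (simp add: algebra_simps)
  qed
  have "(\<lambda>n. (cmod (u n))^2) summable_on UNIV" using u(1) unfolding l2_def by simp
  hence "(\<lambda>n. (cmod (u n))^2) summable_on range (\<lambda>k::nat. n0 + 2 * int k)"
    by (rule summable_on_subset_banach) simp
  hence "((\<lambda>n. (cmod (u n))^2) \<circ> (\<lambda>k::nat. n0 + 2 * int k)) summable_on UNIV"
    by (subst (asm) summable_on_reindex) (auto simp: inj_on_def)
  hence "summable (\<lambda>k::nat. (cmod (u n0))^2)"
    by (subst (asm) summable_on_UNIV_nonneg_real_iff) (auto simp: o_def const)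
  hence "(cmod (u n0))^2 = 0" by (simp add: summable_const_iff)
  thus False using u(2) by simp
qed

lemma boundary_eigenvalueE:
  assumes "boundary_eigenvalue d z"
  obtains u n0 where "u \<in> l2" "u n0 \<noteq> 0" "jacobi d u = (\<lambda>n. z * u n)"
    "z \<notin> interior (numrange d)"
proof -
  from assms obtain u where u: "u \<in> l2" "u \<noteq> (\<lambda>_. 0)" "jacobi d u = (\<lambda>n. z * u n)"
    and "z \<in> frontier (numrange d)"
    unfolding boundary_eigenvalue_def is_eigenvalue_def by blast
  moreover from u(2) obtain n0 where "u n0 \<noteq> 0" by auto
  ultimately show ?thesis using that unfolding frontier_def by blast
qed

theorem mainTheorem8:
  fixes d :: "int \<Rightarrow> complex" and z :: complex and b :: real
  assumes "bounded (range d)"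
    and "boundary_eigenvalue d z"
    and "Im z = b"
  shows "(\<forall>n. Im (d n) = b \<or> Im (d (n + 1)) = b)
       \<and> (\<forall>\<mu>. boundary_eigenvalue d \<mu> \<longrightarrow> Im \<mu> = b)"
proof -
  obtain u n0 where u: "u \<in> l2" "u n0 \<noteq> 0" "jacobi d u = (\<lambda>n. z * u n)"
    "z \<notin> interior (numrange d)" using boundary_eigenvalueE[OF assms(2)] by blast
  note on_support = boundary_eigenvector_site[OF assms(1) u]
  have "Im (d n) = b \<or> Im (d (n + 1)) = b" for n
    using eigen_two_consecutive_zeros[OF u(3), of n] u(2) on_support assms(3) by blast
  moreover have "Im \<mu> = b" if \<mu>: "boundary_eigenvalue d \<mu>" for \<mu>
  proof (rule ccontr)
    assume ne: "Im \<mu> \<noteq> b"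
    obtain v n1 where v: "v \<in> l2" "v n1 \<noteq> 0" "jacobi d v = (\<lambda>n. \<mu> * v n)"
      "\<mu> \<notin> interior (numrange d)" using boundary_eigenvalueE[OF \<mu>] by blast
    have "u n = 0 \<or> v n = 0" for n
      using on_support[of n] boundary_eigenvector_site[OF assms(1) v, of n] assms(3) ne by metis
    thus False using eigenvectors_not_disjoint[OF u(1,2,3) v(2,3)] by blast
  qed
  ultimately show ?thesis by blast
qed

end
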